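(* For a $K\times N$ multicast switch with a given traffic pattern, if a rate vector $\mathbf r$ is admissible, then its enhanced rate vector $\mathbf e(\mathbf r)$ lies in $QSTAB(G)$, where $G$ is the enhanced conflict graph; i.e. $\mathbf e(\mathbf r)$ is nonnegative and satisfies all clique inequalities of $G$.
   Context: A flow is a pair $(i,J)$ with input $i\in[K]$ and nonempty fanout $J\subseteq[N]$; a traffic pattern is a finite set of flows; a rate vector assigns $r_{iJ}\ge0$ to each flow. Subflows: $(i,J,j)$ with $j\in J$. $\mathbf r$ is admissible if $\mathbf r\ge0$, for each input $i$ the sum of $r_{iJ}$ over flows from $i$ is at most 1, and for each output $j$ the sum of $r_{iJ}$ over flows with $j\in J$ is at most 1. Enhanced rate vector: $\mathbf e(\mathbf r)_{iJj}=r_{iJ}$. Enhanced conflict graph $G$: one vertex per subflow; distinct $(i,J,j),(i',J',j')$ adjacent iff $j=j'$, or $i=i'$ and $J\ne J'$. $QSTAB(G)=\{x\ge0:\sum_{v\in Q}x_v\le1 \text{ for every clique } Q\}$. *)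

theory Defs
  imports Complex_Main
begin

text \<open>Inputs are [K] = {1..K}, outputs are [N] = {1..N}.
  A flow is a pair (i, J); a subflow is a triple (i, J, j).\<close>

type_synonym flow = "nat \<times> nat set"
type_synonym subflow = "nat \<times> nat set \<times> nat"

definition flows :: "nat \<Rightarrow> nat \<Rightarrow> flow set" where
  "flows K N = {(i, J). i \<in> {1..K} \<and> J \<subseteq> {1..N} \<and> J \<noteq> {}}"

definition traffic_pattern :: "nat \<Rightarrow> nat \<Rightarrow> flow set \<Rightarrow> bool" where
  "traffic_pattern K N F \<longleftrightarrow> finite F \<and> F \<subseteq> flows K N"

definition admissible :: "nat \<Rightarrow> nat \<Rightarrow> flow set \<Rightarrow> (flow \<Rightarrow> real) \<Rightarrow> bool" where
  "admissible K N F r \<longleftrightarrow>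
     (\<forall>f\<in>F. 0 \<le> r f) \<and>
     (\<forall>i\<in>{1..K}. (\<Sum>f\<in>{(i', J). (i', J) \<in> F \<and> i' = i}. r f) \<le> 1) \<and>
     (\<forall>j\<in>{1..N}. (\<Sum>f\<in>{(i, J). (i, J) \<in> F \<and> j \<in> J}. r f) \<le> 1)"

definition subflows :: "flow set \<Rightarrow> subflow set" where
  "subflows F = {(i, J, j). (i, J) \<in> F \<and> j \<in> J}"

definition enhanced_rate :: "(flow \<Rightarrow> real) \<Rightarrow> subflow \<Rightarrow> real" where
  "enhanced_rate r = (\<lambda>(i, J, j). r (i, J))"

definition ecg_adj :: "subflow \<Rightarrow> subflow \<Rightarrow> bool" where
  "ecg_adj u v \<longleftrightarrow> u \<noteq> v \<and>
     (case u of (i, J, j) \<Rightarrow> case v of (i', J', j') \<Rightarrow>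
        j = j' \<or> (i = i' \<and> J \<noteq> J'))"

definition is_clique :: "'v set \<Rightarrow> ('v \<Rightarrow> 'v \<Rightarrow> bool) \<Rightarrow> 'v set \<Rightarrow> bool" where
  "is_clique V adj Q \<longleftrightarrow> Q \<subseteq> V \<and> (\<forall>u\<in>Q. \<forall>v\<in>Q. u \<noteq> v \<longrightarrow> adj u v)"

text \<open>Clique-constrained stable set polytope of the graph (V, adj); vectors are
  functions, only their values on V matter.\<close>
definition QSTAB :: "'v set \<Rightarrow> ('v \<Rightarrow> 'v \<Rightarrow> bool) \<Rightarrow> ('v \<Rightarrow> real) set" where
  "QSTAB V adj = {x. (\<forall>v\<in>V. 0 \<le> x v) \<and>
                     (\<forall>Q. is_clique V adj Q \<longrightarrow> (\<Sum>v\<in>Q. x v) \<le> 1)}"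

end

theory Submission
  imports Defs
begin

text \<open>Two distinct subflows are adjacent only if they share an output, or share an input and
  belong to different flows. Hence a clique either lives at a single output or at a single input,
  and in both cases distinct members belong to distinct flows. Its enhanced rate is therefore the
  total rate of a set of flows through one output or from one input, which admissibility bounds
  by 1.\<close>

definition flow_of :: "subflow \<Rightarrow> flow" where
  "flow_of = (\<lambda>(i, J, j). (i, J))"

lemma enhanced_rate_eq: "enhanced_rate r v = r (flow_of v)"
  by (cases v) (simp add: enhanced_rate_def flow_of_def)

lemma flow_of_subflows: "flow_of ` subflows F \<subseteq> F"
  by (auto simp: subflows_def flow_of_def)

lemma ecg_adj_cases:
  assumes "ecg_adj (i, J, j) (i', J', j')"
  shows "j = j' \<or> (i = i' \<and> J \<noteq> J')"
  using assms by (simp add: ecg_adj_def)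

lemma inj_on_flow_of_clique:
  assumes "is_clique V ecg_adj Q"
  shows "inj_on flow_of Q"
proof (rule inj_onI, rule ccontr)
  fix u v assume "u \<in> Q" "v \<in> Q" "flow_of u = flow_of v" "u \<noteq> v"
  moreover obtain i J j i' J' j' where "u = (i, J, j)" "v = (i', J', j')"
    by (cases u, cases v) auto
  ultimately show False
    using assms ecg_adj_cases[of i J j i' J' j'] by (auto simp: is_clique_def flow_of_def)
qed

lemma ecg_clique_common_output_or_input:
  assumes "is_clique V ecg_adj Q"
  shows "(\<exists>j. \<forall>v\<in>Q. snd (snd v) = j) \<or> (\<exists>i. \<forall>v\<in>Q. fst v = i)"
proof (rule disjCI)
  have adj: "snd (snd u) = snd (snd v) \<or> fst u = fst v"
    if "u \<in> Q" "v \<in> Q" "u \<noteq> v" for u v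
    using assms that unfolding is_clique_def ecg_adj_def by (fastforce split: prod.splits)
  assume "\<nexists>i. \<forall>v\<in>Q. fst v = i"
  then obtain u v where uv: "u \<in> Q" "v \<in> Q" "fst u \<noteq> fst v"
    by (metis (mono_tags, lifting))
  then have out_uv: "snd (snd u) = snd (snd v)"
    using adj by blast
  \<comment> \<open>any w at another output would share the input of both u and v\<close>
  have "snd (snd w) = snd (snd u)" if "w \<in> Q" for w
    using adj[OF that uv(1)] adj[OF that uv(2)] uv(3) out_uv by metis
  then show "\<exists>j. \<forall>v\<in>Q. snd (snd v) = j" by blast
qed

lemma sum_enhanced_rate_clique:
  assumes "is_clique V ecg_adj Q"
  shows "(\<Sum>v\<in>Q. enhanced_rate r v) = (\<Sum>f\<in>flow_of ` Q. r f)"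
  using sum.reindex[OF inj_on_flow_of_clique[OF assms], of r]
  by (simp add: enhanced_rate_eq)

lemma admissible_sum_le_input:
  assumes "traffic_pattern K N F" "admissible K N F r"
    and "S \<subseteq> F" "S \<noteq> {}" "\<forall>f\<in>S. fst f = i"
  shows "(\<Sum>f\<in>S. r f) \<le> 1"
proof -
  let ?Fi = "{(i', J). (i', J) \<in> F \<and> i' = i}"
  obtain f where "f \<in> S" using assms(4) by blast
  then have "i \<in> {1..K}"
    using assms(1,3,5) unfolding traffic_pattern_def flows_def by fastforce
  have "(\<Sum>f\<in>S. r f) \<le> (\<Sum>f\<in>?Fi. r f)"
    using assms by (intro sum_mono2)
      (auto simp: traffic_pattern_def admissible_def intro: finite_subset)
  also have "\<dots> \<le> 1"
    using assms(2) \<open>i \<in> {1..K}\<close> by (simp add: admissible_def)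
  finally show ?thesis .
qed

lemma admissible_sum_le_output:
  assumes "traffic_pattern K N F" "admissible K N F r"
    and "S \<subseteq> F" "S \<noteq> {}" "\<forall>(i, J)\<in>S. j \<in> J"
  shows "(\<Sum>f\<in>S. r f) \<le> 1"
proof -
  let ?Fj = "{(i, J). (i, J) \<in> F \<and> j \<in> J}"
  obtain f where "f \<in> S" using assms(4) by blast
  then have "j \<in> {1..N}"
    using assms(1,3,5) unfolding traffic_pattern_def flows_def by fastforce
  have "(\<Sum>f\<in>S. r f) \<le> (\<Sum>f\<in>?Fj. r f)"
    using assms by (intro sum_mono2)
      (auto simp: traffic_pattern_def admissible_def intro: finite_subset)
  also have "\<dots> \<le> 1"
    using assms(2) \<open>j \<in> {1..N}\<close> by (simp add: admissible_def)
  finally show ?thesis .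
qed

lemma admissible_clique_sum_le_1:
  assumes "traffic_pattern K N F" "admissible K N F r"
    and Q: "is_clique (subflows F) ecg_adj Q"
  shows "(\<Sum>v\<in>Q. enhanced_rate r v) \<le> 1"
proof (cases "Q = {}")
  case False
  have sub: "flow_of ` Q \<subseteq> F"
    using Q flow_of_subflows by (fastforce simp: is_clique_def)
  have ne: "flow_of ` Q \<noteq> {}" using False by simp
  have in_fanout: "snd (snd v) \<in> fst (snd v)" if "v \<in> Q" for v
    using Q that by (auto simp: is_clique_def subflows_def)
  from ecg_clique_common_output_or_input[OF Q]
  have "(\<Sum>f\<in>flow_of ` Q. r f) \<le> 1"
  proof
    assume "\<exists>j. \<forall>v\<in>Q. snd (snd v) = j"
    then obtain j where "\<forall>v\<in>Q. snd (snd v) = j" by blast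
    then have "\<forall>(i, J)\<in>flow_of ` Q. j \<in> J"
      using in_fanout by (auto simp: flow_of_def)
    then show ?thesis using admissible_sum_le_output[OF assms(1,2) sub ne] by blast
  next
    assume "\<exists>i. \<forall>v\<in>Q. fst v = i"
    then obtain i where "\<forall>v\<in>Q. fst v = i" by blast
    then have "\<forall>f\<in>flow_of ` Q. fst f = i"
      by (auto simp: flow_of_def)
    then show ?thesis using admissible_sum_le_input[OF assms(1,2) sub ne] by blast
  qed
  then show ?thesis using sum_enhanced_rate_clique[OF Q] by simp
qed simp

theorem theorem5:
  fixes K N :: nat and F :: "flow set" and r :: "flow \<Rightarrow> real"
  assumes "traffic_pattern K N F"
    and "admissible K N F r"
  shows "enhanced_rate r \<in> QSTAB (subflows F) ecg_adj"
proof -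
  have "0 \<le> enhanced_rate r v" if "v \<in> subflows F" for v
    using assms(2) flow_of_subflows that by (auto simp: enhanced_rate_eq admissible_def)
  then show ?thesis
    using admissible_clique_sum_le_1[OF assms] by (simp add: QSTAB_def)
qed

end
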